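(* For every bubble function $\mathbf x_b\in\mathbf V_b$ (identified with its coefficient vector), $$\|B_b\mathbf x_b\|_{M_p^{-1}}\le\frac1\zeta\|\mathbf x_b\|_{A_{bb}}\le\frac1\zeta\|\mathbf x_b\|_{D_{bb}}.$$
   Context: $\Omega\subset\mathbb{R}^d$, $d\in\{2,3\}$, bounded, with a shape-regular simplicial mesh; $\mu>0,\lambda\ge0$ Lamé coefficients, $\zeta=\sqrt{\lambda+2\mu/d}$. $\mathbf V_b$ is the space of edge ($d=2$)/face ($d=3$) bubble functions $b_F\mathbf n_F$ ($b_F$ the product of barycentric coordinates of the vertices of face $F$, $\mathbf n_F$ a unit normal); $Q_h$ piecewise constants with mass matrix $M_p$. $A_{bb}$ is the matrix of $a(\mathbf u,\mathbf v)=2\mu\int_\Omega\varepsilon(\mathbf u):\varepsilon(\mathbf v)+\lambda\int_\Omega\operatorname{div}\mathbf u\operatorname{div}\mathbf v$ on $\mathbf V_b$; $B_b$ is the matrix of $-(\operatorname{div}\mathbf v,q)$ for $\mathbf v\in\mathbf V_b,q\in Q_h$; $D_{bb}=(d+1)\operatorname{diag}(A_{bb})$, which is known to satisfy $\|\mathbf x_b\|_{A_{bb}}\le\|\mathbf x_b\|_{D_{bb}}$. For SPD $H$, $\|\mathbf x\|_H^2=(H\mathbf x,\mathbf x)$. *)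

theory Defs
  imports "HOL-Analysis.Analysis"
begin

text \<open>Simplicial mesh: a finite set of simplices, each given by its vertex set
  (d+1 affinely independent points of R^d); the closed element is its convex hull.\<close>

definition simplicial_mesh :: "(real^'d) set set \<Rightarrow> bool" where
  "simplicial_mesh Th \<longleftrightarrow> finite Th \<and> Th \<noteq> {} \<and>
     (\<forall>T\<in>Th. card T = CARD('d) + 1 \<and> \<not> affine_dependent T) \<and>
     (\<forall>T\<in>Th. \<forall>T'\<in>Th. convex hull T \<inter> convex hull T' = convex hull (T \<inter> T'))"

definition domain :: "(real^'d) set set \<Rightarrow> (real^'d) set" where
  "domain Th = (\<Union>T\<in>Th. convex hull T)"

definition mesh_faces :: "(real^'d) set set \<Rightarrow> (real^'d) set set" where
  "mesh_faces Th = {F. \<exists>T\<in>Th. F \<subseteq> T \<and> card F = CARD('d)}"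

definition bary :: "(real^'d) set \<Rightarrow> real^'d \<Rightarrow> real^'d \<Rightarrow> real" where
  "bary T x p = (SOME c. sum c T = 1 \<and> (\<Sum>q\<in>T. c q *\<^sub>R q) = x) p"

definition bubble :: "(real^'d) set set \<Rightarrow> (real^'d) set \<Rightarrow> real^'d \<Rightarrow> real" where
  "bubble Th F x =
     (if \<exists>T\<in>Th. F \<subseteq> T \<and> x \<in> convex hull T
      then (\<Prod>p\<in>F. bary (SOME T. T \<in> Th \<and> F \<subseteq> T \<and> x \<in> convex hull T) x p)
      else 0)"

definition bubble_vec :: "(real^'d) set set \<Rightarrow> ((real^'d) set \<Rightarrow> real^'d) \<Rightarrow> (real^'d) set \<Rightarrow> real^'d \<Rightarrow> real^'d" where
  "bubble_vec Th nF F = (\<lambda>y. bubble Th F y *\<^sub>R nF F)"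

definition bubble_fun :: "(real^'d) set set \<Rightarrow> ((real^'d) set \<Rightarrow> real^'d) \<Rightarrow> (real^'d) set set
    \<Rightarrow> ((real^'d) set \<Rightarrow> real) \<Rightarrow> real^'d \<Rightarrow> real^'d" where
  "bubble_fun Th nF Fs xb = (\<lambda>y. \<Sum>F\<in>Fs. xb F *\<^sub>R bubble_vec Th nF F y)"

definition grad :: "(real^'d \<Rightarrow> real^'d) \<Rightarrow> real^'d \<Rightarrow> real^'d^'d" where
  "grad v x = matrix (frechet_derivative v (at x))"

definition strain :: "(real^'d \<Rightarrow> real^'d) \<Rightarrow> real^'d \<Rightarrow> real^'d^'d" where
  "strain v x = (\<chi> i j. (grad v x $ i $ j + grad v x $ j $ i) / 2)"

definition divg :: "(real^'d \<Rightarrow> real^'d) \<Rightarrow> real^'d \<Rightarrow> real" where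
  "divg v x = trace (grad v x)"

definition ddot :: "real^'d^'d \<Rightarrow> real^'d^'d \<Rightarrow> real" where
  "ddot A B = (\<Sum>i\<in>UNIV. \<Sum>j\<in>UNIV. A $ i $ j * B $ i $ j)"

definition aform :: "real \<Rightarrow> real \<Rightarrow> (real^'d) set \<Rightarrow> (real^'d \<Rightarrow> real^'d) \<Rightarrow> (real^'d \<Rightarrow> real^'d) \<Rightarrow> real" where
  "aform mu lam Om u v =
     2 * mu * integral Om (\<lambda>x. ddot (strain u x) (strain v x))
     + lam * integral Om (\<lambda>x. divg u x * divg v x)"

definition Abb :: "real \<Rightarrow> real \<Rightarrow> (real^'d) set set \<Rightarrow> ((real^'d) set \<Rightarrow> real^'d)
    \<Rightarrow> (real^'d) set \<Rightarrow> (real^'d) set \<Rightarrow> real" where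
  "Abb mu lam Th nF F G = aform mu lam (domain Th) (bubble_vec Th nF G) (bubble_vec Th nF F)"

text \<open>B_b: rows indexed by elements T (basis of Q_h = indicator of element T),
  columns by faces F: entry  -(div (b_F n_F), 1_T).\<close>
definition Bb :: "(real^'d) set set \<Rightarrow> ((real^'d) set \<Rightarrow> real^'d)
    \<Rightarrow> (real^'d) set \<Rightarrow> (real^'d) set \<Rightarrow> real" where
  "Bb Th nF T F = - integral (domain Th)
       (\<lambda>y. divg (bubble_vec Th nF F) y * indicator (convex hull T) y)"

text \<open>Mass matrix of Q_h: diagonal with entries |T|; its inverse.\<close>
definition Mp :: "(real^'d) set \<Rightarrow> (real^'d) set \<Rightarrow> real" where
  "Mp T T' = (if T = T' then measure lebesgue (convex hull T) else 0)"

definition Mp_inv :: "(real^'d) set \<Rightarrow> (real^'d) set \<Rightarrow> real" where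
  "Mp_inv T T' = (if T = T' then 1 / measure lebesgue (convex hull T) else 0)"

definition Dbb :: "real \<Rightarrow> real \<Rightarrow> (real^'d) set set \<Rightarrow> ((real^'d) set \<Rightarrow> real^'d)
    \<Rightarrow> (real^'d) set \<Rightarrow> (real^'d) set \<Rightarrow> real" where
  "Dbb mu lam Th nF F G =
     (if F = G then (real CARD('d) + 1) * Abb mu lam Th nF F F else 0)"

definition matvec :: "('i \<Rightarrow> 'j \<Rightarrow> real) \<Rightarrow> 'j set \<Rightarrow> ('j \<Rightarrow> real) \<Rightarrow> 'i \<Rightarrow> real" where
  "matvec H J x = (\<lambda>i. \<Sum>j\<in>J. H i j * x j)"

definition hnorm :: "('i \<Rightarrow> 'i \<Rightarrow> real) \<Rightarrow> 'i set \<Rightarrow> ('i \<Rightarrow> real) \<Rightarrow> real" where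
  "hnorm H I x = sqrt (\<Sum>i\<in>I. matvec H I x i * x i)"

end

theory Submission
  imports Defs
begin

text \<open>On each element \<open>T\<close> the bubble function \<open>v\<close> is a polynomial, and off a null set
  (element boundaries) its gradient is that polynomial's gradient. Hence \<open>(B x)\<^sub>T = - \<integral>\<^sub>T div v\<close>,
  and Cauchy-Schwarz gives \<open>(B x)\<^sub>T\<^sup>2 / |T| \<le> \<integral>\<^sub>T (div v)\<^sup>2\<close>. Since \<open>div v = tr \<epsilon>(v)\<close>, also
  \<open>(div v)\<^sup>2 \<le> d |\<epsilon>(v)|\<^sup>2\<close>, i.e. \<open>\<zeta>\<^sup>2 (div v)\<^sup>2 \<le> 2\<mu> |\<epsilon>(v)|\<^sup>2 + \<lambda> (div v)\<^sup>2\<close>; summing over the elements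
  yields \<open>\<zeta>\<^sup>2 \<parallel>B x\<parallel>\<^sup>2 \<le> \<parallel>x\<parallel>\<^sup>2\<^sub>A\<close>. For the second inequality, at most \<open>d + 1\<close> bubbles are nonzero
  on an element, so by Cauchy-Schwarz the energy density of \<open>v\<close> is at most \<open>d + 1\<close> times the sum
  of the energy densities of the individual bubbles; integrating gives \<open>\<parallel>x\<parallel>\<^sup>2\<^sub>A \<le> \<parallel>x\<parallel>\<^sup>2\<^sub>D\<close>.\<close>

definition full_simplex :: "(real^'d) set \<Rightarrow> bool" where
  "full_simplex T \<longleftrightarrow> card T = CARD('d) + 1 \<and> \<not> affine_dependent T"

lemma full_simplex_finite: "full_simplex T \<Longrightarrow> finite T"
  unfolding full_simplex_def using card.infinite by fastforce

lemma affine_hull_full_simplex: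
  fixes T :: "(real^'d) set"
  assumes "full_simplex T"
  shows "affine hull T = UNIV"
proof -
  have c: "card T = CARD('d) + 1" "\<not> affine_dependent T"
    using assms unfolding full_simplex_def by auto
  have "of_nat (card T) = aff_dim T + 1"
    using aff_dim_affine_independent[OF c(2)] .
  then have "aff_dim T = int DIM(real^'d)"
    using c(1) by simp
  then show ?thesis
    using aff_dim_eq_full by blast
qed

lemma simplicial_mesh_finite: "simplicial_mesh Th \<Longrightarrow> finite Th"
  unfolding simplicial_mesh_def by blast

lemma simplicial_mesh_full_simplex: "simplicial_mesh Th \<Longrightarrow> T \<in> Th \<Longrightarrow> full_simplex T"
  unfolding simplicial_mesh_def full_simplex_def by auto

lemma simplicial_mesh_hull_inter:
  "simplicial_mesh Th \<Longrightarrow> T \<in> Th \<Longrightarrow> T' \<in> Th \<Longrightarrow>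
     convex hull T \<inter> convex hull T' = convex hull (T \<inter> T')"
  unfolding simplicial_mesh_def by auto

subsection \<open>Barycentric coordinates\<close>

lemma bary_affine_combination:
  fixes T :: "(real^'d) set"
  assumes "full_simplex T"
  shows "(\<Sum>p\<in>T. bary T x p) = 1" "(\<Sum>p\<in>T. bary T x p *\<^sub>R p) = x"
proof -
  have "x \<in> affine hull T"
    using affine_hull_full_simplex[OF assms] by simp
  then have "\<exists>c. sum c T = 1 \<and> (\<Sum>q\<in>T. c q *\<^sub>R q) = x"
    using affine_hull_finite[OF full_simplex_finite[OF assms]] by auto
  from someI_ex[OF this] show "(\<Sum>p\<in>T. bary T x p) = 1" "(\<Sum>p\<in>T. bary T x p *\<^sub>R p) = x"
    unfolding bary_def by simp_all
qed

lemma bary_eqI: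
  fixes T :: "(real^'d) set"
  assumes T: "full_simplex T" and c: "sum c T = 1" "(\<Sum>q\<in>T. c q *\<^sub>R q) = x" and p: "p \<in> T"
  shows "bary T x p = c p"
proof -
  let ?u = "\<lambda>q. bary T x q - c q"
  note b = bary_affine_combination[OF T, of x]
  have "sum ?u T = 0" "(\<Sum>q\<in>T. ?u q *\<^sub>R q) = 0"
    using b c by (simp_all add: sum_subtractf scaleR_diff_left)
  then have "\<forall>q\<in>T. ?u q = 0"
    using T affine_dependent_explicit_finite[OF full_simplex_finite[OF T]]
    unfolding full_simplex_def by blast
  then show ?thesis using p by simp
qed

definition bary_lin :: "(real^'d) set \<Rightarrow> real^'d \<Rightarrow> real^'d \<Rightarrow> real" where
  "bary_lin T p h = bary T h p - bary T 0 p"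

lemma linear_bary_lin:
  fixes T :: "(real^'d) set"
  assumes T: "full_simplex T" and p: "p \<in> T"
  shows "linear (bary_lin T p)"
proof (rule linearI)
  fix x y :: "real^'d" and s :: real
  note b_x = bary_affine_combination[OF T, of x] and b_y = bary_affine_combination[OF T, of y]
    and b_0 = bary_affine_combination[OF T, of 0]
  have "bary T (x + y) p = bary T x p + bary T y p - bary T 0 p"
  proof (rule bary_eqI[OF T _ _ p])
    show "(\<Sum>q\<in>T. bary T x q + bary T y q - bary T 0 q) = 1"
      using b_x b_y b_0 by (simp add: sum.distrib sum_subtractf)
    show "(\<Sum>q\<in>T. (bary T x q + bary T y q - bary T 0 q) *\<^sub>R q) = x + y"
      using b_x b_y b_0 by (simp add: scaleR_add_left scaleR_diff_left sum.distrib sum_subtractf)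
  qed
  then show "bary_lin T p (x + y) = bary_lin T p x + bary_lin T p y"
    unfolding bary_lin_def by simp
  have "bary T (s *\<^sub>R x) p = s * bary T x p + (1 - s) * bary T 0 p"
  proof (rule bary_eqI[OF T _ _ p])
    show "(\<Sum>q\<in>T. s * bary T x q + (1 - s) * bary T 0 q) = 1"
      using b_x b_0 by (simp add: sum.distrib flip: sum_distrib_left)
    show "(\<Sum>q\<in>T. (s * bary T x q + (1 - s) * bary T 0 q) *\<^sub>R q) = s *\<^sub>R x"
      using b_x b_0
      by (simp add: scaleR_add_left sum.distrib flip: scaleR_scaleR scaleR_right.sum)
  qed
  then show "bary_lin T p (s *\<^sub>R x) = s *\<^sub>R bary_lin T p x"
    unfolding bary_lin_def by (simp add: algebra_simps)
qed

lemma has_derivative_bary: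
  fixes T :: "(real^'d) set"
  assumes "full_simplex T" "p \<in> T"
  shows "((\<lambda>x. bary T x p) has_derivative bary_lin T p) (at y)"
proof -
  have "bounded_linear (bary_lin T p)"
    using linear_bary_lin[OF assms] linear_conv_bounded_linear by blast
  then have "(bary_lin T p has_derivative bary_lin T p) (at y)"
    by (rule bounded_linear.has_derivative[OF _ has_derivative_ident])
  then have "((\<lambda>x. bary_lin T p x + bary T 0 p) has_derivative bary_lin T p) (at y)"
    by (rule has_derivative_add_const)
  moreover have "(\<lambda>x. bary_lin T p x + bary T 0 p) = (\<lambda>x. bary T x p)"
    unfolding bary_lin_def by simp
  ultimately show ?thesis
    by simp
qed

lemma continuous_on_bary:
  fixes T :: "(real^'d) set"
  assumes "full_simplex T" "p \<in> T"
  shows "continuous_on S (\<lambda>x. bary T x p)"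
proof -
  have "isCont (\<lambda>x. bary T x p) x" for x
    using has_derivative_bary[OF assms] by (rule has_derivative_continuous)
  then show ?thesis
    by (simp add: continuous_at_imp_continuous_on)
qed

definition local_bubble :: "(real^'d) set \<Rightarrow> ((real^'d) set \<Rightarrow> real^'d) \<Rightarrow> (real^'d) set
    \<Rightarrow> real^'d \<Rightarrow> real^'d" where
  "local_bubble T nF F z = (if F \<subseteq> T then \<Prod>p\<in>F. bary T z p else 0) *\<^sub>R nF F"

definition local_bubble_deriv :: "(real^'d) set \<Rightarrow> ((real^'d) set \<Rightarrow> real^'d) \<Rightarrow> (real^'d) set
    \<Rightarrow> real^'d \<Rightarrow> real^'d \<Rightarrow> real^'d" where
  "local_bubble_deriv T nF F z h =
     (if F \<subseteq> T then \<Sum>p\<in>F. bary_lin T p h * (\<Prod>q\<in>F - {p}. bary T z q) else 0) *\<^sub>R nF F"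

definition local_bubble_grad :: "(real^'d) set \<Rightarrow> ((real^'d) set \<Rightarrow> real^'d) \<Rightarrow> (real^'d) set
    \<Rightarrow> real^'d \<Rightarrow> real^'d^'d" where
  "local_bubble_grad T nF F z = matrix (local_bubble_deriv T nF F z)"

lemma has_derivative_local_bubble:
  fixes T :: "(real^'d) set"
  assumes T: "full_simplex T"
  shows "(local_bubble T nF F has_derivative local_bubble_deriv T nF F z) (at z)"
proof (cases "F \<subseteq> T")
  case True
  have "((\<lambda>x. \<Prod>p\<in>F. bary T x p) has_derivative
          (\<lambda>h. \<Sum>p\<in>F. bary_lin T p h * (\<Prod>q\<in>F - {p}. bary T z q))) (at z)"
    using True by (intro has_derivative_prod has_derivative_bary[OF T]) auto
  then show ?thesis
    using True unfolding local_bubble_def local_bubble_deriv_def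
    by (simp add: has_derivative_scaleR_left)
next
  case False
  then show ?thesis
    unfolding local_bubble_def local_bubble_deriv_def by simp
qed

lemma local_bubble_grad_entry:
  "local_bubble_grad T nF F z $ i $ j =
     (if F \<subseteq> T then \<Sum>p\<in>F. bary_lin T p (axis j 1) * (\<Prod>q\<in>F - {p}. bary T z q) else 0) * nF F $ i"
  unfolding local_bubble_grad_def matrix_def local_bubble_deriv_def by simp

lemma local_bubble_grad_outside: "\<not> F \<subseteq> T \<Longrightarrow> local_bubble_grad T nF F z = 0"
  by (simp add: vec_eq_iff local_bubble_grad_entry)

lemma continuous_on_local_bubble_grad:
  fixes T :: "(real^'d) set"
  assumes T: "full_simplex T"
  shows "continuous_on S (local_bubble_grad T nF F)"
proof (cases "F \<subseteq> T")
  case True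
  have "local_bubble_grad T nF F = (\<lambda>z. \<chi> i j.
          (\<Sum>p\<in>F. bary_lin T p (axis j 1) * (\<Prod>q\<in>F - {p}. bary T z q)) * nF F $ i)"
    using True by (auto simp: fun_eq_iff vec_eq_iff local_bubble_grad_entry)
  moreover have "continuous_on S (\<lambda>z. \<chi> i j.
          (\<Sum>p\<in>F. bary_lin T p (axis j 1) * (\<Prod>q\<in>F - {p}. bary T z q)) * nF F $ i)"
    using True by (intro continuous_on_vec_lambda continuous_intros continuous_on_bary[OF T]) auto
  ultimately show ?thesis by simp
next
  case False
  then show ?thesis
    by (simp add: local_bubble_grad_outside)
qed

subsection \<open>The skeleton of a mesh\<close>

definition mesh_overlap :: "(real^'d) set set \<Rightarrow> (real^'d) set" where
  "mesh_overlap Th = (\<Union>T\<in>Th. \<Union>T'\<in>Th - {T}. convex hull (T \<inter> T'))"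

definition mesh_skeleton :: "(real^'d) set set \<Rightarrow> (real^'d) set" where
  "mesh_skeleton Th = (\<Union>T\<in>Th. frontier (convex hull T)) \<union> mesh_overlap Th"

lemma closed_mesh_overlap:
  assumes "simplicial_mesh Th"
  shows "closed (mesh_overlap Th)"
  unfolding mesh_overlap_def
  using simplicial_mesh_finite[OF assms] full_simplex_finite[OF simplicial_mesh_full_simplex[OF assms]]
  by (intro closed_UN ballI compact_imp_closed finite_imp_compact_convex_hull) auto

lemma negligible_convex_hull_low_card:
  fixes S :: "(real^'d) set"
  assumes "finite S" "card S \<le> CARD('d)"
  shows "negligible (convex hull S)"
proof -
  have "aff_dim (convex hull S) \<le> int (card S) - 1"
    using aff_dim_le_card[OF assms(1)] by (simp add: aff_dim_convex_hull)
  then have "aff_dim (convex hull S) \<noteq> int DIM(real^'d)"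
    using assms(2) by simp
  then have "interior (convex hull S) = {}"
    by (rule low_dim_interior)
  then have "frontier (convex hull S) = convex hull S"
    using assms(1) by (simp add: frontier_def closure_closed compact_imp_closed finite_imp_compact_convex_hull)
  then show ?thesis
    using negligible_convex_frontier[OF convex_convex_hull] by metis
qed

lemma negligible_mesh_skeleton:
  fixes Th :: "(real^'d) set set"
  assumes mesh: "simplicial_mesh Th"
  shows "negligible (mesh_skeleton Th)"
proof -
  have "negligible (convex hull (T \<inter> T'))" if "T \<in> Th" "T' \<in> Th" "T' \<noteq> T" for T T'
  proof (rule negligible_convex_hull_low_card)
    note T = simplicial_mesh_full_simplex[OF mesh that(1)]
      and T' = simplicial_mesh_full_simplex[OF mesh that(2)]
    show "finite (T \<inter> T')"
      using full_simplex_finite[OF T] by simp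
    have "\<not> T \<subseteq> T'"
      using card_subset_eq[OF full_simplex_finite[OF T']] T T' that(3)
      unfolding full_simplex_def by metis
    then have "card (T \<inter> T') < card T"
      using full_simplex_finite[OF T] by (intro psubset_card_mono) auto
    then show "card (T \<inter> T') \<le> CARD('d)"
      using T unfolding full_simplex_def by simp
  qed
  then show ?thesis
    unfolding mesh_skeleton_def mesh_overlap_def using simplicial_mesh_finite[OF mesh]
    by (intro negligible_Un negligible_Union) (auto intro: negligible_convex_frontier)
qed

lemma mesh_element_unique:
  assumes "simplicial_mesh Th" "T \<in> Th" "T' \<in> Th" "y \<in> convex hull T" "y \<in> convex hull T'"
    and "y \<notin> mesh_overlap Th"
  shows "T' = T"
  using assms simplicial_mesh_hull_inter[OF assms(1-3)] unfolding mesh_overlap_def by blast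

lemma grad_bubble_vec:
  fixes Th :: "(real^'d) set set"
  assumes mesh: "simplicial_mesh Th" and T: "T \<in> Th"
    and y: "y \<in> convex hull T" "y \<notin> mesh_skeleton Th"
  shows "grad (bubble_vec Th nF F) y = local_bubble_grad T nF F y"
proof -
  note T_simplex = simplicial_mesh_full_simplex[OF mesh T]
  define U where "U = interior (convex hull T) - mesh_overlap Th"
  have "open U"
    unfolding U_def using closed_mesh_overlap[OF mesh] by auto
  have "closed (convex hull T)"
    using full_simplex_finite[OF T_simplex] by (simp add: compact_imp_closed finite_imp_compact_convex_hull)
  moreover have "y \<notin> frontier (convex hull T)" "y \<notin> mesh_overlap Th"
    using y(2) T unfolding mesh_skeleton_def by auto
  ultimately have "y \<in> U"
    using y(1) unfolding U_def by (simp add: frontier_def closure_closed)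
  have "bubble_vec Th nF F z = local_bubble T nF F z" if "z \<in> U" for z
  proof -
    have z: "z \<in> convex hull T" "z \<notin> mesh_overlap Th"
      using that interior_subset unfolding U_def by auto
    \<comment> \<open>off the overlaps, the element chosen by the SOME in \<open>bubble\<close> can only be \<open>T\<close>\<close>
    have unique: "T' = T" if "T' \<in> Th" "z \<in> convex hull T'" for T'
      using mesh_element_unique[OF mesh T that(1) z(1) that(2) z(2)] .
    show ?thesis
    proof (cases "F \<subseteq> T")
      case True
      then have ex: "\<exists>T'\<in>Th. F \<subseteq> T' \<and> z \<in> convex hull T'"
        using T z(1) by blast
      have "(SOME T'. T' \<in> Th \<and> F \<subseteq> T' \<and> z \<in> convex hull T') = T"
        by (rule some_equality) (use True T z(1) unique in blast)+
      then show ?thesis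
        unfolding bubble_vec_def bubble_def local_bubble_def using ex True by simp
    next
      case False
      then have "\<not> (\<exists>T'\<in>Th. F \<subseteq> T' \<and> z \<in> convex hull T')"
        using unique by blast
      then have "bubble Th F z = 0"
        unfolding bubble_def by (rule if_not_P)
      then show ?thesis
        unfolding bubble_vec_def local_bubble_def using False by simp
    qed
  qed
  then have "(bubble_vec Th nF F has_derivative local_bubble_deriv T nF F y) (at y)"
    by (intro has_derivative_transform_within_open[OF has_derivative_local_bubble[OF T_simplex]
          \<open>open U\<close> \<open>y \<in> U\<close>]) auto
  then have "frechet_derivative (bubble_vec Th nF F) (at y) = local_bubble_deriv T nF F y"
    by (rule frechet_derivative_at[symmetric])
  then show ?thesis
    unfolding grad_def local_bubble_grad_def by simp
qed

subsection \<open>Integration over a mesh\<close>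

lemma integrable_on_compact_continuous:
  fixes f :: "'a::euclidean_space \<Rightarrow> real"
  assumes "compact S" "continuous_on S f"
  shows "f integrable_on S"
proof -
  have "integrable lborel (\<lambda>x. indicator S x *\<^sub>R f x)"
    by (rule borel_integrable_compact[OF assms])
  then have "(\<lambda>x. indicator S x *\<^sub>R f x) integrable_on UNIV"
    by (rule integrable_on_lborel)
  moreover have "(\<lambda>x. indicator S x *\<^sub>R f x) = (\<lambda>x. if x \<in> S then f x else 0)"
    by (auto simp: indicator_def)
  ultimately show ?thesis
    using integrable_restrict_UNIV[of S f] by simp
qed

lemma integrable_on_full_simplex:
  fixes T :: "(real^'d) set" and f :: "real^'d \<Rightarrow> real"
  assumes "full_simplex T" "continuous_on (convex hull T) f"
  shows "f integrable_on convex hull T"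
  using integrable_on_compact_continuous[OF finite_imp_compact_convex_hull assms(2)]
    full_simplex_finite[OF assms(1)] .

lemma has_integral_piecewise:
  fixes Th :: "(real^'d) set set" and g :: "real^'d \<Rightarrow> real"
  assumes mesh: "simplicial_mesh Th"
    and cont: "\<And>T. T \<in> Th \<Longrightarrow> continuous_on (convex hull T) (h T)"
    and agree: "\<And>T y. T \<in> Th \<Longrightarrow> y \<in> convex hull T \<Longrightarrow> y \<notin> mesh_skeleton Th \<Longrightarrow> g y = h T y"
  shows "(g has_integral (\<Sum>T\<in>Th. integral (convex hull T) (h T))) (domain Th)"
proof -
  note fin = simplicial_mesh_finite[OF mesh]
  have "((\<lambda>y. if y \<in> convex hull T then h T y else 0) has_integral integral (convex hull T) (h T)) UNIV"
    if "T \<in> Th" for T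
    using integrable_on_full_simplex[OF simplicial_mesh_full_simplex[OF mesh that] cont[OF that]]
    by (simp add: has_integral_restrict_UNIV integrable_integral)
  then have sum: "((\<lambda>y. \<Sum>T\<in>Th. if y \<in> convex hull T then h T y else 0) has_integral
           (\<Sum>T\<in>Th. integral (convex hull T) (h T))) UNIV"
    by (rule has_integral_sum[OF fin])
  have "(if y \<in> domain Th then g y else 0) = (\<Sum>T\<in>Th. if y \<in> convex hull T then h T y else 0)"
    if y: "y \<notin> mesh_skeleton Th" for y
  proof (cases "y \<in> domain Th")
    case True
    then obtain T where T: "T \<in> Th" "y \<in> convex hull T"
      unfolding domain_def by auto
    have overlap: "y \<notin> mesh_overlap Th"
      using y unfolding mesh_skeleton_def by simp
    have "(if y \<in> convex hull T' then h T' y else 0) = (if T' = T then h T y else 0)"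
      if "T' \<in> Th" for T'
    proof (cases "T' = T")
      case False
      then have "y \<notin> convex hull T'"
        using mesh_element_unique[OF mesh T(1) that T(2) _ overlap] by blast
      then show ?thesis
        using False by simp
    qed (use T(2) in simp)
    then have "(\<Sum>T'\<in>Th. if y \<in> convex hull T' then h T' y else 0) = h T y"
      using fin T(1) by (simp add: sum.delta cong: sum.cong)
    then show ?thesis
      using True agree[OF T y] by simp
  next
    case False
    then show ?thesis
      unfolding domain_def by (auto intro: sum.neutral)
  qed
  then have "((\<lambda>y. if y \<in> domain Th then g y else 0) has_integral
           (\<Sum>T\<in>Th. integral (convex hull T) (h T))) UNIV"
    by (intro has_integral_spike[OF negligible_mesh_skeleton[OF mesh] _ sum]) auto
  then show ?thesis
    by (simp add: has_integral_restrict_UNIV)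
qed

lemma integral_square_le:
  fixes f :: "'a::euclidean_space \<Rightarrow> real"
  assumes S: "S \<in> lmeasurable" and f: "f integrable_on S" and f2: "(\<lambda>y. (f y)\<^sup>2) integrable_on S"
  shows "(integral S f)\<^sup>2 / measure lebesgue S \<le> integral S (\<lambda>y. (f y)\<^sup>2)"
proof (cases "measure lebesgue S = 0")
  case True
  then show ?thesis
    using integral_nonneg[OF f2] by simp
next
  case False
  let ?m = "measure lebesgue S" and ?I = "integral S f" and ?J = "integral S (\<lambda>y. (f y)\<^sup>2)"
  have m: "?m > 0"
    using False measure_nonneg[of lebesgue S] by linarith
  define a where "a = ?I / ?m"
  have one: "((\<lambda>y. 1) has_integral ?m) S"
    using integrable_integral[OF integrable_on_const[OF S, of 1]] lmeasure_integral[OF S] by simp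
  have "((\<lambda>y. (f y)\<^sup>2 - 2 * a * f y + a\<^sup>2 * 1) has_integral (?J - 2 * a * ?I + a\<^sup>2 * ?m)) S"
    using has_integral_add[OF has_integral_diff[OF integrable_integral[OF f2]
          has_integral_mult_right[OF integrable_integral[OF f]]] has_integral_mult_right[OF one]] .
  moreover have "0 \<le> (f y)\<^sup>2 - 2 * a * f y + a\<^sup>2 * 1" for y
  proof -
    have "(f y)\<^sup>2 - 2 * a * f y + a\<^sup>2 * 1 = (f y - a)\<^sup>2"
      by (simp add: power2_eq_square algebra_simps)
    then show ?thesis
      by simp
  qed
  ultimately have "0 \<le> ?J - 2 * a * ?I + a\<^sup>2 * ?m"
    by (rule has_integral_nonneg)
  moreover have "2 * a * ?I - a\<^sup>2 * ?m = ?I\<^sup>2 / ?m"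
    unfolding a_def using m by (simp add: field_simps power2_eq_square)
  ultimately show ?thesis
    by linarith
qed

subsection \<open>The pointwise Lame form\<close>

definition sym_part :: "real^'d^'d \<Rightarrow> real^'d^'d" where
  "sym_part M = (\<chi> i j. (M $ i $ j + M $ j $ i) / 2)"

definition lame_form :: "real \<Rightarrow> real \<Rightarrow> real^'d^'d \<Rightarrow> real^'d^'d \<Rightarrow> real" where
  "lame_form mu lam M N = 2 * mu * ddot (sym_part M) (sym_part N) + lam * (trace M * trace N)"

lemma strain_eq_sym_part: "strain v x = sym_part (grad v x)"
  unfolding strain_def sym_part_def ..

lemma continuous_on_sym_part [continuous_intros]:
  fixes A :: "'a::topological_space \<Rightarrow> real^'d^'d"
  shows "continuous_on S A \<Longrightarrow> continuous_on S (\<lambda>y. sym_part (A y))"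
  unfolding sym_part_def by (intro continuous_on_vec_lambda continuous_intros) auto

lemma continuous_on_ddot [continuous_intros]:
  fixes A B :: "'a::topological_space \<Rightarrow> real^'d^'d"
  shows "continuous_on S A \<Longrightarrow> continuous_on S B \<Longrightarrow> continuous_on S (\<lambda>y. ddot (A y) (B y))"
  unfolding ddot_def by (intro continuous_intros)

lemma continuous_on_trace [continuous_intros]:
  fixes A :: "'a::topological_space \<Rightarrow> real^'d^'d"
  shows "continuous_on S A \<Longrightarrow> continuous_on S (\<lambda>y. trace (A y))"
  unfolding trace_def by (intro continuous_intros)

lemma continuous_on_lame_form [continuous_intros]:
  fixes A B :: "'a::topological_space \<Rightarrow> real^'d^'d"
  shows "continuous_on S A \<Longrightarrow> continuous_on S B \<Longrightarrow> continuous_on S (\<lambda>y. lame_form mu lam (A y) (B y))"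
  unfolding lame_form_def by (intro continuous_intros)

lemma linear_sym_part: "linear sym_part"
  by (rule linearI) (simp_all add: sym_part_def vec_eq_iff add_divide_distrib algebra_simps)

lemma linear_trace: "linear (trace :: real^'d^'d \<Rightarrow> real)"
  by (rule linearI) (simp_all add: trace_def sum.distrib sum_distrib_left)

lemma bilinear_lame_form: "bilinear (lame_form mu lam)"
  unfolding bilinear_def lame_form_def ddot_def linear_iff
  by (simp add: linear_add[OF linear_sym_part] linear_scale[OF linear_sym_part]
      linear_add[OF linear_trace] linear_scale[OF linear_trace] algebra_simps sum.distrib sum_distrib_left)

lemma lame_form_self:
  "lame_form mu lam M M = 2 * mu * (\<Sum>i\<in>UNIV. \<Sum>j\<in>UNIV. (sym_part M $ i $ j)\<^sup>2) + lam * (trace M)\<^sup>2"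
  unfolding lame_form_def ddot_def by (simp add: power2_eq_square)

lemma lame_form_nonneg: "mu \<ge> 0 \<Longrightarrow> lam \<ge> 0 \<Longrightarrow> 0 \<le> lame_form mu lam M M"
  unfolding lame_form_self by (intro add_nonneg_nonneg mult_nonneg_nonneg sum_nonneg) auto

lemma trace_square_le:
  fixes M :: "real^'d^'d"
  shows "(trace M)\<^sup>2 \<le> real CARD('d) * (\<Sum>i\<in>UNIV. \<Sum>j\<in>UNIV. (sym_part M $ i $ j)\<^sup>2)"
proof -
  have "trace M = (\<Sum>i\<in>UNIV. sym_part M $ i $ i)"
    unfolding trace_def sym_part_def by simp
  then have "(trace M)\<^sup>2 \<le> (\<Sum>i\<in>UNIV. (sym_part M $ i $ i)\<^sup>2) * real CARD('d)"
    by (simp add: sum_squared_le_sum_of_squares)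
  also have "(\<Sum>i\<in>UNIV. (sym_part M $ i $ i)\<^sup>2) \<le> (\<Sum>i\<in>UNIV. \<Sum>j\<in>UNIV. (sym_part M $ i $ j)\<^sup>2)"
    by (intro sum_mono member_le_sum) auto
  finally show ?thesis
    by (simp add: mult.commute mult_left_mono)
qed

lemma lame_form_trace_lower:
  fixes M :: "real^'d^'d"
  assumes "mu \<ge> 0"
  shows "(lam + 2 * mu / real CARD('d)) * (trace M)\<^sup>2 \<le> lame_form mu lam M M"
proof -
  have "2 * mu / real CARD('d) * (trace M)\<^sup>2
      \<le> 2 * mu / real CARD('d) * (real CARD('d) * (\<Sum>i\<in>UNIV. \<Sum>j\<in>UNIV. (sym_part M $ i $ j)\<^sup>2))"
    using trace_square_le[of M] assms by (intro mult_left_mono) auto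
  then show ?thesis
    unfolding lame_form_self by (simp add: algebra_simps)
qed

lemma lame_form_sum_le:
  fixes A :: "'i \<Rightarrow> real^'d^'d"
  assumes "mu \<ge> 0" "lam \<ge> 0"
  shows "lame_form mu lam (\<Sum>k\<in>I. A k) (\<Sum>k\<in>I. A k) \<le> real (card I) * (\<Sum>k\<in>I. lame_form mu lam (A k) (A k))"
proof -
  have sq: "(\<Sum>k\<in>I. f k)\<^sup>2 \<le> real (card I) * (\<Sum>k\<in>I. (f k)\<^sup>2)" for f :: "'i \<Rightarrow> real"
    using sum_squared_le_sum_of_squares[of f I] by (simp add: mult.commute)
  have "(\<Sum>i\<in>UNIV. \<Sum>j\<in>UNIV. (sym_part (\<Sum>k\<in>I. A k) $ i $ j)\<^sup>2)
      = (\<Sum>i\<in>UNIV. \<Sum>j\<in>UNIV. (\<Sum>k\<in>I. sym_part (A k) $ i $ j)\<^sup>2)"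
    by (simp add: linear_sum[OF linear_sym_part])
  also have "\<dots> \<le> (\<Sum>i\<in>UNIV. \<Sum>j\<in>UNIV. real (card I) * (\<Sum>k\<in>I. (sym_part (A k) $ i $ j)\<^sup>2))"
    by (intro sum_mono sq)
  also have "\<dots> = real (card I) * (\<Sum>k\<in>I. \<Sum>i\<in>UNIV. \<Sum>j\<in>UNIV. (sym_part (A k) $ i $ j)\<^sup>2)"
    by (simp add: sum_distrib_left sum.swap[of _ I])
  finally have sym: "(\<Sum>i\<in>UNIV. \<Sum>j\<in>UNIV. (sym_part (\<Sum>k\<in>I. A k) $ i $ j)\<^sup>2)
      \<le> real (card I) * (\<Sum>k\<in>I. \<Sum>i\<in>UNIV. \<Sum>j\<in>UNIV. (sym_part (A k) $ i $ j)\<^sup>2)" .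
  have tr: "(trace (\<Sum>k\<in>I. A k))\<^sup>2 \<le> real (card I) * (\<Sum>k\<in>I. (trace (A k))\<^sup>2)"
    unfolding linear_sum[OF linear_trace] by (rule sq)
  show ?thesis
    using add_mono[OF mult_left_mono[OF sym, of "2 * mu"] mult_left_mono[OF tr, of lam]] assms
    unfolding lame_form_self by (simp add: sum.distrib sum_distrib_left algebra_simps)
qed

lemma lame_form_sum_sum:
  "lame_form mu lam (\<Sum>k\<in>I. c k *\<^sub>R A k) (\<Sum>l\<in>I. d l *\<^sub>R B l) =
     (\<Sum>k\<in>I. \<Sum>l\<in>I. c k * d l * lame_form mu lam (A k) (B l))"
proof -
  have "lame_form mu lam (\<Sum>k\<in>I. c k *\<^sub>R A k) (\<Sum>l\<in>I. d l *\<^sub>R B l) =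
      (\<Sum>(k, l)\<in>I \<times> I. lame_form mu lam (c k *\<^sub>R A k) (d l *\<^sub>R B l))"
    by (rule bilinear_sum[OF bilinear_lame_form])
  also have "\<dots> = (\<Sum>k\<in>I. \<Sum>l\<in>I. c k * d l * lame_form mu lam (A k) (B l))"
    by (simp add: sum.cartesian_product[symmetric] bilinear_lmul[OF bilinear_lame_form]
        bilinear_rmul[OF bilinear_lame_form] mult_ac)
  finally show ?thesis .
qed

definition local_grad :: "(real^'d) set \<Rightarrow> ((real^'d) set \<Rightarrow> real^'d) \<Rightarrow> (real^'d) set set
    \<Rightarrow> ((real^'d) set \<Rightarrow> real) \<Rightarrow> real^'d \<Rightarrow> real^'d^'d" where
  "local_grad T nF Fs xb y = (\<Sum>F\<in>Fs. xb F *\<^sub>R local_bubble_grad T nF F y)"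

lemma continuous_on_local_grad:
  fixes T :: "(real^'d) set"
  shows "full_simplex T \<Longrightarrow> continuous_on S (local_grad T nF Fs xb)"
  unfolding local_grad_def by (intro continuous_intros continuous_on_local_bubble_grad)

lemma Abb_eq_sum_integrals:
  fixes Th :: "(real^'d) set set"
  assumes mesh: "simplicial_mesh Th"
  shows "Abb mu lam Th nF F G = (\<Sum>T\<in>Th. integral (convex hull T)
           (\<lambda>y. lame_form mu lam (local_bubble_grad T nF G y) (local_bubble_grad T nF F y)))"
proof -
  have cont: "continuous_on S (local_bubble_grad T nF H)" if "T \<in> Th" for T H S
    using continuous_on_local_bubble_grad[OF simplicial_mesh_full_simplex[OF mesh that]] .
  have strain: "((\<lambda>x. ddot (strain (bubble_vec Th nF G) x) (strain (bubble_vec Th nF F) x))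
      has_integral (\<Sum>T\<in>Th. integral (convex hull T)
        (\<lambda>y. ddot (sym_part (local_bubble_grad T nF G y)) (sym_part (local_bubble_grad T nF F y)))))
      (domain Th)"
  proof (rule has_integral_piecewise[OF mesh])
    fix T y assume "T \<in> Th" "y \<in> convex hull T" "y \<notin> mesh_skeleton Th"
    then show "ddot (strain (bubble_vec Th nF G) y) (strain (bubble_vec Th nF F) y) =
        ddot (sym_part (local_bubble_grad T nF G y)) (sym_part (local_bubble_grad T nF F y))"
      by (simp add: strain_eq_sym_part grad_bubble_vec[OF mesh])
  qed (intro continuous_intros cont)
  have div: "((\<lambda>x. divg (bubble_vec Th nF G) x * divg (bubble_vec Th nF F) x)
      has_integral (\<Sum>T\<in>Th. integral (convex hull T)
        (\<lambda>y. trace (local_bubble_grad T nF G y) * trace (local_bubble_grad T nF F y)))) (domain Th)"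
  proof (rule has_integral_piecewise[OF mesh])
    fix T y assume "T \<in> Th" "y \<in> convex hull T" "y \<notin> mesh_skeleton Th"
    then show "divg (bubble_vec Th nF G) y * divg (bubble_vec Th nF F) y =
        trace (local_bubble_grad T nF G y) * trace (local_bubble_grad T nF F y)"
      by (simp add: divg_def grad_bubble_vec[OF mesh])
  qed (intro continuous_intros cont)
  have "integral (convex hull T)
          (\<lambda>y. lame_form mu lam (local_bubble_grad T nF G y) (local_bubble_grad T nF F y))
      = 2 * mu * integral (convex hull T)
          (\<lambda>y. ddot (sym_part (local_bubble_grad T nF G y)) (sym_part (local_bubble_grad T nF F y)))
        + lam * integral (convex hull T)
          (\<lambda>y. trace (local_bubble_grad T nF G y) * trace (local_bubble_grad T nF F y))"
    if "T \<in> Th" for T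
  proof -
    note T = simplicial_mesh_full_simplex[OF mesh that]
    have "(\<lambda>y. ddot (sym_part (local_bubble_grad T nF G y)) (sym_part (local_bubble_grad T nF F y)))
        integrable_on convex hull T"
      "(\<lambda>y. trace (local_bubble_grad T nF G y) * trace (local_bubble_grad T nF F y))
        integrable_on convex hull T"
      by (intro integrable_on_full_simplex[OF T] continuous_intros cont that)+
    from integral_add[OF integrable_cmul[OF this(1), of "2 * mu"] integrable_cmul[OF this(2), of lam]]
    show ?thesis
      unfolding lame_form_def by simp
  qed
  then show ?thesis
    unfolding Abb_def aform_def integral_unique[OF strain] integral_unique[OF div]
    by (simp add: sum.distrib sum_distrib_left)
qed

lemma Bb_eq_integral:
  fixes Th :: "(real^'d) set set"
  assumes mesh: "simplicial_mesh Th" and T0: "T0 \<in> Th"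
  shows "Bb Th nF T0 F = - integral (convex hull T0) (\<lambda>y. trace (local_bubble_grad T0 nF F y))"
proof -
  let ?h = "\<lambda>T y. (if T = T0 then 1 else 0) * trace (local_bubble_grad T nF F y)"
  have int: "((\<lambda>y. divg (bubble_vec Th nF F) y * indicator (convex hull T0) y) has_integral
      (\<Sum>T\<in>Th. integral (convex hull T) (?h T))) (domain Th)"
  proof (rule has_integral_piecewise[OF mesh])
    fix T assume "T \<in> Th"
    show "continuous_on (convex hull T) (?h T)"
      by (intro continuous_intros continuous_on_local_bubble_grad
          simplicial_mesh_full_simplex[OF mesh \<open>T \<in> Th\<close>])
  next
    fix T y assume T: "T \<in> Th" "y \<in> convex hull T" and y: "y \<notin> mesh_skeleton Th"
    have "y \<notin> mesh_overlap Th"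
      using y unfolding mesh_skeleton_def by simp
    then have "indicator (convex hull T0) y = (if T = T0 then 1 else (0::real))"
      using mesh_element_unique[OF mesh T(1) T0 T(2)] T(2) by (auto simp: indicator_def)
    then show "divg (bubble_vec Th nF F) y * indicator (convex hull T0) y = ?h T y"
      unfolding divg_def grad_bubble_vec[OF mesh T y] by simp
  qed
  have "(\<Sum>T\<in>Th. integral (convex hull T) (?h T))
      = (\<Sum>T\<in>Th. if T = T0 then integral (convex hull T0) (\<lambda>y. trace (local_bubble_grad T0 nF F y)) else 0)"
    by (intro sum.cong) auto
  also have "\<dots> = integral (convex hull T0) (\<lambda>y. trace (local_bubble_grad T0 nF F y))"
    using simplicial_mesh_finite[OF mesh] T0 by simp
  finally show ?thesis
    unfolding Bb_def integral_unique[OF int] by simp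
qed

definition quad_form :: "('i \<Rightarrow> 'i \<Rightarrow> real) \<Rightarrow> 'i set \<Rightarrow> ('i \<Rightarrow> real) \<Rightarrow> real" where
  "quad_form H I x = (\<Sum>i\<in>I. matvec H I x i * x i)"

lemma hnorm_eq_sqrt_quad_form: "hnorm H I x = sqrt (quad_form H I x)"
  unfolding hnorm_def quad_form_def ..

lemma quad_form_diagonal:
  assumes "finite I"
  shows "quad_form (\<lambda>i j. if i = j then w i else 0) I x = (\<Sum>i\<in>I. w i * (x i)\<^sup>2)"
proof -
  have "matvec (\<lambda>i j. if i = j then w i else 0) I x i = w i * x i" if "i \<in> I" for i
  proof -
    have "matvec (\<lambda>i j. if i = j then w i else 0) I x i = (\<Sum>j\<in>I. if i = j then w i * x j else 0)"
      unfolding matvec_def by (intro sum.cong) auto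
    then show ?thesis
      using assms that by simp
  qed
  then show ?thesis
    unfolding quad_form_def by (simp add: power2_eq_square mult.assoc)
qed

lemma quad_form_Mp_inv:
  "finite Th \<Longrightarrow> quad_form Mp_inv Th v = (\<Sum>T\<in>Th. (v T)\<^sup>2 / measure lebesgue (convex hull T))"
  unfolding Mp_inv_def[abs_def] by (simp add: quad_form_diagonal)

lemma quad_form_Dbb:
  fixes Th :: "(real^'d) set set"
  shows "finite Fs \<Longrightarrow> quad_form (Dbb mu lam Th nF) Fs xb
     = (real CARD('d) + 1) * (\<Sum>F\<in>Fs. (xb F)\<^sup>2 * Abb mu lam Th nF F F)"
  unfolding Dbb_def[abs_def] by (simp add: quad_form_diagonal sum_distrib_left mult_ac)

lemma integral_sum_sum:
  fixes f :: "'i \<Rightarrow> 'i \<Rightarrow> 'a::euclidean_space \<Rightarrow> real"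
  assumes "finite I" "\<And>i j. i \<in> I \<Longrightarrow> j \<in> I \<Longrightarrow> f i j integrable_on S"
  shows "integral S (\<lambda>y. \<Sum>i\<in>I. \<Sum>j\<in>I. c i j * f i j y) = (\<Sum>i\<in>I. \<Sum>j\<in>I. c i j * integral S (f i j))"
  using assms by (intro integral_unique has_integral_sum has_integral_mult_right integrable_integral) auto

lemma quad_form_Abb:
  fixes Th :: "(real^'d) set set"
  assumes mesh: "simplicial_mesh Th" and fin: "finite Fs"
  shows "quad_form (Abb mu lam Th nF) Fs xb =
     (\<Sum>T\<in>Th. integral (convex hull T) (\<lambda>y. lame_form mu lam (local_grad T nF Fs xb y) (local_grad T nF Fs xb y)))"
proof -
  let ?I = "\<lambda>T G F. integral (convex hull T)
    (\<lambda>y. lame_form mu lam (local_bubble_grad T nF G y) (local_bubble_grad T nF F y))"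
  have element: "integral (convex hull T)
        (\<lambda>y. lame_form mu lam (local_grad T nF Fs xb y) (local_grad T nF Fs xb y))
      = (\<Sum>G\<in>Fs. \<Sum>F\<in>Fs. xb G * xb F * ?I T G F)" if "T \<in> Th" for T
    unfolding local_grad_def lame_form_sum_sum
    using fin simplicial_mesh_full_simplex[OF mesh that]
    by (intro integral_sum_sum integrable_on_full_simplex continuous_intros continuous_on_local_bubble_grad)
  have "quad_form (Abb mu lam Th nF) Fs xb = (\<Sum>F\<in>Fs. \<Sum>G\<in>Fs. \<Sum>T\<in>Th. xb G * xb F * ?I T G F)"
    unfolding quad_form_def matvec_def Abb_eq_sum_integrals[OF mesh]
    by (simp add: sum_distrib_left sum_distrib_right mult_ac)
  also have "\<dots> = (\<Sum>G\<in>Fs. \<Sum>F\<in>Fs. \<Sum>T\<in>Th. xb G * xb F * ?I T G F)"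
    by (rule sum.swap)
  also have "\<dots> = (\<Sum>G\<in>Fs. \<Sum>T\<in>Th. \<Sum>F\<in>Fs. xb G * xb F * ?I T G F)"
    by (intro sum.cong refl sum.swap)
  also have "\<dots> = (\<Sum>T\<in>Th. \<Sum>G\<in>Fs. \<Sum>F\<in>Fs. xb G * xb F * ?I T G F)"
    by (rule sum.swap)
  finally show ?thesis
    by (simp add: element)
qed

lemma matvec_Bb:
  fixes Th :: "(real^'d) set set"
  assumes mesh: "simplicial_mesh Th" and fin: "finite Fs" and T: "T \<in> Th"
  shows "matvec (Bb Th nF) Fs xb T = - integral (convex hull T) (\<lambda>y. trace (local_grad T nF Fs xb y))"
proof -
  note T_simplex = simplicial_mesh_full_simplex[OF mesh T]
  have "trace (local_grad T nF Fs xb y) = (\<Sum>F\<in>Fs. xb F * trace (local_bubble_grad T nF F y))" for y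
    unfolding local_grad_def by (simp add: linear_sum[OF linear_trace] linear_scale[OF linear_trace])
  moreover have "((\<lambda>y. \<Sum>F\<in>Fs. xb F * trace (local_bubble_grad T nF F y)) has_integral
      (\<Sum>F\<in>Fs. xb F * integral (convex hull T) (\<lambda>y. trace (local_bubble_grad T nF F y)))) (convex hull T)"
    using fin by (intro has_integral_sum has_integral_mult_right integrable_integral
        integrable_on_full_simplex[OF T_simplex] continuous_intros continuous_on_local_bubble_grad[OF T_simplex])
  ultimately show ?thesis
    unfolding matvec_def Bb_eq_integral[OF mesh T] by (simp add: integral_unique sum_negf mult.commute)
qed

lemma finite_mesh_faces:
  fixes Th :: "(real^'d) set set"
  assumes mesh: "simplicial_mesh Th"
  shows "finite (mesh_faces Th)"
proof -
  have "mesh_faces Th \<subseteq> (\<Union>T\<in>Th. Pow T)"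
    unfolding mesh_faces_def by auto
  then show ?thesis
    using simplicial_mesh_finite[OF mesh] full_simplex_finite[OF simplicial_mesh_full_simplex[OF mesh]]
    by (auto intro: finite_subset)
qed

lemma quad_form_Bb_le:
  fixes Th :: "(real^'d) set set"
  assumes mesh: "simplicial_mesh Th" and fin: "finite Fs" and mu: "mu \<ge> 0" and lam: "lam \<ge> 0"
  shows "(lam + 2 * mu / real CARD('d)) * quad_form Mp_inv Th (matvec (Bb Th nF) Fs xb)
           \<le> quad_form (Abb mu lam Th nF) Fs xb"
proof -
  define c where "c = lam + 2 * mu / real CARD('d)"
  have "c \<ge> 0"
    unfolding c_def using mu lam by simp
  have element: "c * ((matvec (Bb Th nF) Fs xb T)\<^sup>2 / measure lebesgue (convex hull T))
      \<le> integral (convex hull T) (\<lambda>y. lame_form mu lam (local_grad T nF Fs xb y) (local_grad T nF Fs xb y))"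
    if "T \<in> Th" for T
  proof -
    note T = simplicial_mesh_full_simplex[OF mesh that]
    let ?t = "\<lambda>y. trace (local_grad T nF Fs xb y)"
    have cont: "continuous_on (convex hull T) (local_grad T nF Fs xb)"
      by (rule continuous_on_local_grad[OF T])
    have "(matvec (Bb Th nF) Fs xb T)\<^sup>2 / measure lebesgue (convex hull T)
        \<le> integral (convex hull T) (\<lambda>y. (?t y)\<^sup>2)"
      unfolding matvec_Bb[OF mesh fin that] power2_minus
      using full_simplex_finite[OF T] cont
      by (intro integral_square_le lmeasurable_compact finite_imp_compact_convex_hull
          integrable_on_full_simplex[OF T] continuous_intros)
    then have "c * ((matvec (Bb Th nF) Fs xb T)\<^sup>2 / measure lebesgue (convex hull T))
        \<le> c * integral (convex hull T) (\<lambda>y. (?t y)\<^sup>2)"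
      using \<open>c \<ge> 0\<close> by (rule mult_left_mono)
    also have "\<dots> = integral (convex hull T) (\<lambda>y. c * (?t y)\<^sup>2)"
      by (rule integral_mult_right[symmetric])
    also have "\<dots> \<le> integral (convex hull T)
        (\<lambda>y. lame_form mu lam (local_grad T nF Fs xb y) (local_grad T nF Fs xb y))"
      using cont lame_form_trace_lower[OF mu] unfolding c_def
      by (intro integral_le integrable_on_full_simplex[OF T] continuous_intros) auto
    finally show ?thesis .
  qed
  have "c * quad_form Mp_inv Th (matvec (Bb Th nF) Fs xb)
      = (\<Sum>T\<in>Th. c * ((matvec (Bb Th nF) Fs xb T)\<^sup>2 / measure lebesgue (convex hull T)))"
    by (simp add: quad_form_Mp_inv[OF simplicial_mesh_finite[OF mesh]] sum_distrib_left)
  also have "\<dots> \<le> quad_form (Abb mu lam Th nF) Fs xb"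
    unfolding quad_form_Abb[OF mesh fin] by (intro sum_mono element)
  finally show ?thesis
    unfolding c_def .
qed

lemma lame_form_local_grad_le:
  fixes T :: "(real^'d) set"
  assumes T: "full_simplex T" and faces: "\<forall>F\<in>Fs. card F = CARD('d)" and fin: "finite Fs"
    and mu: "mu \<ge> 0" and lam: "lam \<ge> 0"
  shows "lame_form mu lam (local_grad T nF Fs xb y) (local_grad T nF Fs xb y)
     \<le> (real CARD('d) + 1) *
        (\<Sum>F\<in>Fs. (xb F)\<^sup>2 * lame_form mu lam (local_bubble_grad T nF F y) (local_bubble_grad T nF F y))"
proof -
  let ?I = "{F\<in>Fs. F \<subseteq> T}"
  let ?A = "\<lambda>F. xb F *\<^sub>R local_bubble_grad T nF F y"
  let ?S = "\<Sum>F\<in>Fs. (xb F)\<^sup>2 * lame_form mu lam (local_bubble_grad T nF F y) (local_bubble_grad T nF F y)"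
  have local_grad: "local_grad T nF Fs xb y = (\<Sum>F\<in>?I. ?A F)"
    unfolding local_grad_def using fin
    by (intro sum.mono_neutral_right) (auto simp: local_bubble_grad_outside)
  have sum_eq: "(\<Sum>F\<in>?I. lame_form mu lam (?A F) (?A F)) = ?S"
    using fin
    by (intro sum.mono_neutral_cong_left)
       (auto simp: bilinear_lmul[OF bilinear_lame_form] bilinear_rmul[OF bilinear_lame_form]
         bilinear_lzero[OF bilinear_lame_form] local_bubble_grad_outside power2_eq_square)
  have "card ?I \<le> card {F. F \<subseteq> T \<and> card F = CARD('d)}"
    using faces full_simplex_finite[OF T] by (intro card_mono) auto
  also have "\<dots> = CARD('d) + 1"
    using n_subsets[OF full_simplex_finite[OF T]] T unfolding full_simplex_def by simp
  finally have card: "real (card ?I) \<le> real CARD('d) + 1"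
    by simp
  have "lame_form mu lam (local_grad T nF Fs xb y) (local_grad T nF Fs xb y) \<le> real (card ?I) * ?S"
    using lame_form_sum_le[OF mu lam, of ?A ?I] unfolding local_grad sum_eq .
  also have "\<dots> \<le> (real CARD('d) + 1) * ?S"
    using card by (intro mult_right_mono sum_nonneg mult_nonneg_nonneg zero_le_power2
        lame_form_nonneg[OF mu lam])
  finally show ?thesis .
qed

lemma quad_form_Abb_le_Dbb:
  fixes Th :: "(real^'d) set set"
  assumes mesh: "simplicial_mesh Th" and faces: "Fs \<subseteq> mesh_faces Th"
    and mu: "mu \<ge> 0" and lam: "lam \<ge> 0"
  shows "quad_form (Abb mu lam Th nF) Fs xb \<le> quad_form (Dbb mu lam Th nF) Fs xb"
proof -
  have fin: "finite Fs"
    using finite_subset[OF faces finite_mesh_faces[OF mesh]] .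
  have card: "\<forall>F\<in>Fs. card F = CARD('d)"
    using faces unfolding mesh_faces_def by auto
  let ?J = "\<lambda>T F. integral (convex hull T)
    (\<lambda>y. lame_form mu lam (local_bubble_grad T nF F y) (local_bubble_grad T nF F y))"
  have element: "integral (convex hull T)
        (\<lambda>y. lame_form mu lam (local_grad T nF Fs xb y) (local_grad T nF Fs xb y))
      \<le> (real CARD('d) + 1) * (\<Sum>F\<in>Fs. (xb F)\<^sup>2 * ?J T F)" if "T \<in> Th" for T
  proof -
    note T = simplicial_mesh_full_simplex[OF mesh that]
    have "((\<lambda>y. lame_form mu lam (local_grad T nF Fs xb y) (local_grad T nF Fs xb y))
        has_integral integral (convex hull T)
          (\<lambda>y. lame_form mu lam (local_grad T nF Fs xb y) (local_grad T nF Fs xb y))) (convex hull T)"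
      by (intro integrable_integral integrable_on_full_simplex[OF T] continuous_intros
          continuous_on_local_grad[OF T])
    moreover have "((\<lambda>y. (real CARD('d) + 1) * (\<Sum>F\<in>Fs. (xb F)\<^sup>2 *
            lame_form mu lam (local_bubble_grad T nF F y) (local_bubble_grad T nF F y)))
        has_integral ((real CARD('d) + 1) * (\<Sum>F\<in>Fs. (xb F)\<^sup>2 * ?J T F))) (convex hull T)"
      using fin by (intro has_integral_mult_right has_integral_sum integrable_integral
          integrable_on_full_simplex[OF T] continuous_intros continuous_on_local_bubble_grad[OF T])
    ultimately show ?thesis
      by (rule has_integral_le) (rule lame_form_local_grad_le[OF T card fin mu lam])
  qed
  have "quad_form (Abb mu lam Th nF) Fs xb \<le> (\<Sum>T\<in>Th. (real CARD('d) + 1) * (\<Sum>F\<in>Fs. (xb F)\<^sup>2 * ?J T F))"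
    unfolding quad_form_Abb[OF mesh fin] by (intro sum_mono element)
  also have "\<dots> = (real CARD('d) + 1) * (\<Sum>T\<in>Th. \<Sum>F\<in>Fs. (xb F)\<^sup>2 * ?J T F)"
    by (simp add: sum_distrib_left)
  also have "\<dots> = (real CARD('d) + 1) * (\<Sum>F\<in>Fs. \<Sum>T\<in>Th. (xb F)\<^sup>2 * ?J T F)"
    by (subst sum.swap) (rule refl)
  also have "\<dots> = (real CARD('d) + 1) * (\<Sum>F\<in>Fs. (xb F)\<^sup>2 * Abb mu lam Th nF F F)"
    by (simp add: Abb_eq_sum_integrals[OF mesh] sum_distrib_left)
  also have "\<dots> = quad_form (Dbb mu lam Th nF) Fs xb"
    by (rule quad_form_Dbb[OF fin, symmetric])
  finally show ?thesis .
qed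

theorem corollaryA2:
  fixes Th :: "(real^'d) set set" and Fs :: "(real^'d) set set"
    and nF :: "(real^'d) set \<Rightarrow> real^'d"
    and mu lam :: real and xb :: "(real^'d) set \<Rightarrow> real"
  assumes dim: "CARD('d) = 2 \<or> CARD('d) = 3"
    and mesh: "simplicial_mesh Th"
    and faces: "Fs \<subseteq> mesh_faces Th"
    and normals: "\<forall>F\<in>Fs. norm (nF F) = 1 \<and> (\<forall>p\<in>F. \<forall>q\<in>F. nF F \<bullet> (p - q) = 0)"
    and mu: "mu > 0" and lam: "lam \<ge> 0"
  shows "hnorm Mp_inv Th (matvec (Bb Th nF) Fs xb)
           \<le> (1 / sqrt (lam + 2 * mu / real CARD('d))) * hnorm (Abb mu lam Th nF) Fs xb
       \<and> (1 / sqrt (lam + 2 * mu / real CARD('d))) * hnorm (Abb mu lam Th nF) Fs xb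
           \<le> (1 / sqrt (lam + 2 * mu / real CARD('d))) * hnorm (Dbb mu lam Th nF) Fs xb"
proof
  define c where "c = lam + 2 * mu / real CARD('d)"
  have "c > 0"
    unfolding c_def using mu lam by (simp add: add_nonneg_pos)
  have "finite Fs"
    using finite_subset[OF faces finite_mesh_faces[OF mesh]] .
  then have "c * quad_form Mp_inv Th (matvec (Bb Th nF) Fs xb) \<le> quad_form (Abb mu lam Th nF) Fs xb"
    unfolding c_def using quad_form_Bb_le[OF mesh _ _ lam] mu by simp
  then have "sqrt (quad_form Mp_inv Th (matvec (Bb Th nF) Fs xb))
      \<le> sqrt (quad_form (Abb mu lam Th nF) Fs xb / c)"
    using \<open>c > 0\<close> by (simp add: pos_le_divide_eq mult.commute)
  then show "hnorm Mp_inv Th (matvec (Bb Th nF) Fs xb)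
      \<le> (1 / sqrt (lam + 2 * mu / real CARD('d))) * hnorm (Abb mu lam Th nF) Fs xb"
    unfolding hnorm_eq_sqrt_quad_form c_def by (simp add: real_sqrt_divide)
  show "(1 / sqrt (lam + 2 * mu / real CARD('d))) * hnorm (Abb mu lam Th nF) Fs xb
      \<le> (1 / sqrt (lam + 2 * mu / real CARD('d))) * hnorm (Dbb mu lam Th nF) Fs xb"
    unfolding hnorm_eq_sqrt_quad_form
    using quad_form_Abb_le_Dbb[OF mesh faces less_imp_le[OF mu] lam] \<open>c > 0\<close> unfolding c_def
    by (intro mult_left_mono real_sqrt_le_mono) simp_all
qed

end
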